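(* The mechanism \textsc{Greedy Min-Sum} is strategyproof: for every instance $(N,P,T,(\mathbf{D}_i)_{i\in N})$, every agent $i\in N$ and every disapproval vector $\mathbf{D}'_i$, we have $d_i(\mathcal{M}(\mathcal{D}_{-i},\mathbf{D}_i))\le d_i(\mathcal{M}(\mathcal{D}_{-i},\mathbf{D}'_i))$, where $\mathcal{M}$ is \textsc{Greedy Min-Sum} and $d_i$ is computed with respect to the true disapproval vector $\mathbf{D}_i$.
   Context: An instance is $(N,P,T,(\mathbf{D}_i)_{i\in N})$ with agents $N=[n]$, projects $P=\{p_1,\dots,p_m\}$, timesteps $T=[\ell]$, and disapproval vectors $\mathbf{D}_i=(D_{i1},\dots,D_{i\ell})$ with $D_{ik}\subseteq P$. An outcome is $\mathbf{o}=(o_1,\dots,o_\ell)\in P^\ell$ and $d_i(\mathbf{o})=|\{k\in T:o_k\in D_{ik}\}|$. A mechanism maps each instance to an outcome. $\mathcal{D}_{-i}$ denotes the list of disapproval vectors of all agents other than $i$. \textsc{Greedy Min-Sum} selects, at each timestep $k$, a project with the smallest number of agents disapproving it at timestep $k$ (i.e., minimizing $|\{j\in N:p\in D_{jk}\}|$), breaking ties lexicographically according to the fixed order $p_1,\dots,p_m$. *)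

theory Defs
  imports Main
begin

(* Agents: 0..<n.  Projects p_1..p_m are encoded as 0..<m (lexicographic order =
   numeric order).  Timesteps: 0..<l.
   A profile D :: nat => nat => nat set maps agent j and timestep k to D_{jk}. *)

type_synonym profile = "nat \<Rightarrow> nat \<Rightarrow> nat set"

definition disapproval_count :: "nat \<Rightarrow> profile \<Rightarrow> nat \<Rightarrow> nat \<Rightarrow> nat" where
  "disapproval_count n D k p = card {j \<in> {0..<n}. p \<in> D j k}"

definition greedy_choice :: "nat \<Rightarrow> nat \<Rightarrow> profile \<Rightarrow> nat \<Rightarrow> nat" where
  "greedy_choice n m D k =
     (LEAST p. p < m \<and> (\<forall>q<m. disapproval_count n D k p \<le> disapproval_count n D k q))"

definition greedy_min_sum :: "nat \<Rightarrow> nat \<Rightarrow> nat \<Rightarrow> profile \<Rightarrow> nat list" where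
  "greedy_min_sum n m l D = map (greedy_choice n m D) [0..<l]"

definition disutility :: "(nat \<Rightarrow> nat set) \<Rightarrow> nat list \<Rightarrow> nat" where
  "disutility Di out = card {k. k < length out \<and> out ! k \<in> Di k}"

end

theory Submission
  imports Defs
begin

(* Changing agent i's report moves the disapproval count of a project p by
   [p in D_i'] - [p in D_i].  If the truthful choice g lies in D_i, then a
   project h outside D_i can only overtake g if neither g gained nor h lost:
   the counts of g and h tie both before and after the change, and the
   lexicographic tie-breaking then forces g = h.  So every timestep that i
   disapproves under truthful reporting stays disapproved under any misreport. *)

definition least_argmin :: "nat \<Rightarrow> (nat \<Rightarrow> nat) \<Rightarrow> nat" where
  "least_argmin m f = (LEAST p. p < m \<and> (\<forall>q<m. f p \<le> f q))"

lemma greedy_choice_eq_least_argmin: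
  "greedy_choice n m D k = least_argmin m (disapproval_count n D k)"
  unfolding greedy_choice_def least_argmin_def ..

lemma least_argmin_minimal:
  assumes "0 < m"
  shows "least_argmin m f < m" and "\<And>q. q < m \<Longrightarrow> f (least_argmin m f) \<le> f q"
proof -
  obtain x where "x < m \<and> (\<forall>q<m. f x \<le> f q)"
    using ex_has_least_nat[of "\<lambda>p. p < m" 0 f] assms by auto
  then have "least_argmin m f < m \<and> (\<forall>q<m. f (least_argmin m f) \<le> f q)"
    unfolding least_argmin_def by (rule LeastI)
  then show "least_argmin m f < m" and "\<And>q. q < m \<Longrightarrow> f (least_argmin m f) \<le> f q"
    by auto
qed

lemma least_argmin_le:
  assumes "p < m" and "\<And>q. q < m \<Longrightarrow> f p \<le> f q"
  shows "least_argmin m f \<le> p"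
  unfolding least_argmin_def using assms by (auto intro: Least_le)

lemma least_argmin_stays_in:
  assumes "0 < m"
    and shift: "\<And>p. p < m \<Longrightarrow> f' p + of_bool (p \<in> A) = f p + of_bool (p \<in> B)"
    and "least_argmin m f \<in> A"
  shows "least_argmin m f' \<in> A"
proof (rule ccontr)
  define g h where "g = least_argmin m f" and "h = least_argmin m f'"
  assume "h \<notin> A"
  have g: "g < m" "\<And>q. q < m \<Longrightarrow> f g \<le> f q"
    unfolding g_def using least_argmin_minimal[OF \<open>0 < m\<close>] by auto
  have h: "h < m" "\<And>q. q < m \<Longrightarrow> f' h \<le> f' q"
    unfolding h_def using least_argmin_minimal[OF \<open>0 < m\<close>] by auto
  have "g \<in> A" using assms(3) unfolding g_def .
  have "f g \<le> f h" "f' h \<le> f' g" using g h by auto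
  moreover have "f' g + 1 = f g + of_bool (g \<in> B)"
    using shift[OF \<open>g < m\<close>] \<open>g \<in> A\<close> by simp
  moreover have "f' h = f h + of_bool (h \<in> B)"
    using shift[OF \<open>h < m\<close>] \<open>h \<notin> A\<close> by simp
  ultimately have "f h = f g" and "f' g = f' h"
    by (auto simp: of_bool_def split: if_splits)
  have "g \<le> h"
    unfolding g_def using \<open>h < m\<close> by (rule least_argmin_le) (use g \<open>f h = f g\<close> in auto)
  moreover have "h \<le> g"
    unfolding h_def using \<open>g < m\<close> by (rule least_argmin_le) (use h \<open>f' g = f' h\<close> in auto)
  ultimately show False
    using \<open>g \<in> A\<close> \<open>h \<notin> A\<close> by simp
qed

lemma disapproval_count_eq_sum:
  "disapproval_count n D k p = (\<Sum>j<n. of_bool (p \<in> D j k))"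
  unfolding disapproval_count_def by (simp add: lessThan_atLeast0 Int_def)

lemma disapproval_count_fun_upd:
  assumes "i < n"
  shows "disapproval_count n (D(i := Di')) k p + of_bool (p \<in> D i k)
       = disapproval_count n D k p + of_bool (p \<in> Di' k)"
proof -
  let ?others = "\<Sum>j\<in>{..<n} - {i}. (of_bool (p \<in> D j k) :: nat)"
  have "disapproval_count n (D(i := Di')) k p = of_bool (p \<in> Di' k) + ?others"
    unfolding disapproval_count_eq_sum using assms
    by (auto simp del: sum_of_bool_eq simp add: sum.remove[of "{..<n}" i] intro!: sum.cong)
  moreover have "disapproval_count n D k p = of_bool (p \<in> D i k) + ?others"
    unfolding disapproval_count_eq_sum using assms
    by (simp del: sum_of_bool_eq add: sum.remove[of "{..<n}" i])
  ultimately show ?thesis by simp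
qed

theorem theorem9:
  fixes n m l :: nat and D :: profile and i :: nat and Di' :: "nat \<Rightarrow> nat set"
  assumes "m \<ge> 1"
    and "\<And>j k. j < n \<Longrightarrow> k < l \<Longrightarrow> D j k \<subseteq> {0..<m}"
    and "\<And>k. k < l \<Longrightarrow> Di' k \<subseteq> {0..<m}"
    and "i < n"
  shows "disutility (D i) (greedy_min_sum n m l D)
           \<le> disutility (D i) (greedy_min_sum n m l (D(i := Di')))"
proof -
  have "greedy_choice n m (D(i := Di')) k \<in> D i k"
    if "greedy_choice n m D k \<in> D i k" for k
    using least_argmin_stays_in[of m "disapproval_count n (D(i := Di')) k" "D i k"
        "disapproval_count n D k" "Di' k"] disapproval_count_fun_upd[OF \<open>i < n\<close>]
        that \<open>m \<ge> 1\<close>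
    by (simp add: greedy_choice_eq_least_argmin)
  then show ?thesis
    unfolding disutility_def greedy_min_sum_def
    by (intro card_mono) auto
qed

end
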